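(* Let $\mathcal{G}_n(\mathcal{X},\mathcal{Y},d,Q)$ be a position-optimization game (as defined in the context) and let $c>0$ satisfy $n\ge\frac1c>\frac{2}{p_0}$. Then in every pure Nash equilibrium $\bm{x}$, for every $x\in\mathcal{X}^*$, $k_{\bm{x}}(x)\ge\lfloor cn\rfloor$.
   Context: Position-optimization game: $\mathcal{X}$ is an arbitrary set of positions, $\mathcal{Y}$ an arbitrary set of targets, $d:\mathcal{X}\times\mathcal{Y}\to[0,\infty]$ a proximity function. For $y\in\mathcal{Y}$ let $x^*(y)=\arg\min_{x\in\mathcal{X}} d(x,y)$, and $\mathcal{X}^*=\bigcup_{y\in\mathcal{Y}}x^*(y)$ (pseudo-targets). $Q$ is a probability distribution on $\mathcal{Y}$ with $Q(\{y:|x^*(y)|>1\})=0$ and $|\mathcal{X}^*|<\infty$. For $x\in\mathcal{X}^*$ let $P(x)=Q(\{y: x^*(y)=\{x\}\})$ and $p_0=\min_{x\in\mathcal{X}^*}P(x)$. In the game $\mathcal{G}_n(\mathcal{X},\mathcal{Y},d,Q)$, players $i\in[n]$ choose positions $x_i\in\mathcal{X}$, $\bm{x}=(x_1,\dots,x_n)$; with $X_{\min}(\bm{x},y)=\arg\min_{x_i\in\bm{x}} d(x_i,y)$, player $i$'s utility is $u_i(x_i,\bm{x}_{-i})=\mathbb{E}_{y\sim Q}\big[\mathbb{1}[x_i\in X_{\min}(\bm{x},y)]/|X_{\min}(\bm{x},y)|\big]$. A pure Nash equilibrium is $\bm{x}$ with $u_i(x_i',\bm{x}_{-i})\le u_i(x_i,\bm{x}_{-i})$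 for all $i$, $x_i'\in\mathcal{X}$. $k_{\bm{x}}(x)$ is the number of players at position $x$. *)

theory Defs
  imports "HOL-Probability.Probability"
begin

text \<open>Positions: a set X of type 'x; targets: the space of the
  probability measure Q; proximity d with values in [0,\<infinity>] (ennreal).
  A profile of n players is a function xs :: nat \<Rightarrow> 'x, player i < n sits at xs i.\<close>

definition xstar :: "'x set \<Rightarrow> ('x \<Rightarrow> 'y \<Rightarrow> ennreal) \<Rightarrow> 'y \<Rightarrow> 'x set" where
  "xstar X d y = {x \<in> X. \<forall>x'\<in>X. d x y \<le> d x' y}"

definition Xstar :: "'x set \<Rightarrow> ('x \<Rightarrow> 'y \<Rightarrow> ennreal) \<Rightarrow> 'y measure \<Rightarrow> 'x set" where
  "Xstar X d Q = (\<Union>y\<in>space Q. xstar X d y)"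

definition Pmass :: "'x set \<Rightarrow> ('x \<Rightarrow> 'y \<Rightarrow> ennreal) \<Rightarrow> 'y measure \<Rightarrow> 'x \<Rightarrow> real" where
  "Pmass X d Q x = measure Q {y \<in> space Q. xstar X d y = {x}}"

definition p0 :: "'x set \<Rightarrow> ('x \<Rightarrow> 'y \<Rightarrow> ennreal) \<Rightarrow> 'y measure \<Rightarrow> real" where
  "p0 X d Q = Min (Pmass X d Q ` Xstar X d Q)"

definition winners :: "('x \<Rightarrow> 'y \<Rightarrow> ennreal) \<Rightarrow> nat \<Rightarrow> (nat \<Rightarrow> 'x) \<Rightarrow> 'y \<Rightarrow> nat set" where
  "winners d n xs y = {i. i < n \<and> (\<forall>j<n. d (xs i) y \<le> d (xs j) y)}"

definition utility :: "('x \<Rightarrow> 'y \<Rightarrow> ennreal) \<Rightarrow> 'y measure \<Rightarrow> nat \<Rightarrow> (nat \<Rightarrow> 'x) \<Rightarrow> nat \<Rightarrow> real" where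
  "utility d Q n xs i =
     (\<integral>y. (if i \<in> winners d n xs y then 1 / real (card (winners d n xs y)) else 0) \<partial>Q)"

definition is_profile :: "'x set \<Rightarrow> nat \<Rightarrow> (nat \<Rightarrow> 'x) \<Rightarrow> bool" where
  "is_profile X n xs \<longleftrightarrow> (\<forall>i<n. xs i \<in> X)"

definition pure_NE :: "'x set \<Rightarrow> ('x \<Rightarrow> 'y \<Rightarrow> ennreal) \<Rightarrow> 'y measure \<Rightarrow> nat \<Rightarrow> (nat \<Rightarrow> 'x) \<Rightarrow> bool" where
  "pure_NE X d Q n xs \<longleftrightarrow> is_profile X n xs \<and>
     (\<forall>i<n. \<forall>x'\<in>X. utility d Q n (xs(i := x')) i \<le> utility d Q n xs i)"

definition kcount :: "nat \<Rightarrow> (nat \<Rightarrow> 'x) \<Rightarrow> 'x \<Rightarrow> nat" where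
  "kcount n xs x = card {i. i < n \<and> xs i = x}"

end

theory Submission
  imports Defs
begin

text \<open>The utilities of any profile sum to at most 1, so some player \<open>i\<close> earns at most \<open>1/n\<close>.
  If fewer than \<open>\<lfloor>c n\<rfloor>\<close> players sat at a pseudo-target \<open>x\<close>, then \<open>i\<close>, already at \<open>x\<close> or
  after moving there, would share the targets whose unique nearest position is \<open>x\<close>, of mass
  \<open>P(x) \<ge> p\<^sub>0 > c\<close>, with at most \<open>\<lfloor>c n\<rfloor>\<close> players and so earn more than \<open>1/n\<close>:
  this contradicts either the choice of \<open>i\<close> or the equilibrium property.\<close>

lemma winners_subset: "winners d n xs y \<subseteq> {..<n}"
  by (auto simp: winners_def)

lemma measurable_winners:
  assumes "\<And>j. j < n \<Longrightarrow> d (xs j) \<in> borel_measurable Q"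
  shows "winners d n xs \<in> measurable Q (count_space (Pow {..<n}))"
proof (subst measurable_count_space_eq2, simp, intro conjI ballI)
  show "winners d n xs \<in> space Q \<rightarrow> Pow {..<n}"
    by (auto simp: winners_def)
  fix S assume "S \<in> Pow {..<n}"
  then have "winners d n xs y = S \<longleftrightarrow> (\<forall>i<n. i \<in> S \<longleftrightarrow> (\<forall>j<n. d (xs i) y \<le> d (xs j) y))" for y
    unfolding winners_def set_eq_iff by auto
  then have "winners d n xs -` {S} \<inter> space Q
      = {y \<in> space Q. \<forall>i<n. i \<in> S \<longleftrightarrow> (\<forall>j<n. d (xs i) y \<le> d (xs j) y)}"
    by blast
  also have "\<dots> \<in> sets Q"
    using assms by measurable
  finally show "winners d n xs -` {S} \<inter> space Q \<in> sets Q" .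
qed

definition share :: "('x \<Rightarrow> 'y \<Rightarrow> ennreal) \<Rightarrow> nat \<Rightarrow> (nat \<Rightarrow> 'x) \<Rightarrow> nat \<Rightarrow> 'y \<Rightarrow> real" where
  "share d n xs i y = (if i \<in> winners d n xs y then 1 / real (card (winners d n xs y)) else 0)"

lemma utility_eq_integral_share: "utility d Q n xs i = (\<integral>y. share d n xs i y \<partial>Q)"
  by (simp add: utility_def share_def)

lemma share_nonneg: "0 \<le> share d n xs i y"
  by (simp add: share_def)

lemma share_le_1: "share d n xs i y \<le> 1"
  by (cases "card (winners d n xs y)") (auto simp: share_def)

lemma sum_share_le_1: "(\<Sum>i<n. share d n xs i y) \<le> 1"
proof -
  let ?W = "winners d n xs y"
  have "(\<Sum>i<n. share d n xs i y) = (\<Sum>i\<in>?W. 1 / real (card ?W))"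
    using winners_subset[of d n xs y]
    by (simp add: share_def sum.If_cases Int_absorb1)
  also have "\<dots> \<le> 1"
    by (cases "card ?W = 0") auto
  finally show ?thesis .
qed

lemma integrable_share:
  assumes "finite_measure Q" and "\<And>j. j < n \<Longrightarrow> d (xs j) \<in> borel_measurable Q"
  shows "integrable Q (share d n xs i)"
proof -
  interpret finite_measure Q by fact
  have "share d n xs i = (\<lambda>W. if i \<in> W then 1 / real (card W) else 0) \<circ> winners d n xs"
    by (simp add: fun_eq_iff share_def)
  also have "\<dots> \<in> borel_measurable Q"
    by (rule measurable_comp[OF measurable_winners]) (simp_all add: assms(2))
  finally have "share d n xs i \<in> borel_measurable Q" .
  moreover have "AE y in Q. norm (share d n xs i y) \<le> 1"
    by (simp add: share_nonneg share_le_1)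
  ultimately show ?thesis
    by (rule integrable_const_bound[rotated])
qed

lemma sum_utility_le_1:
  assumes "prob_space Q" and "\<And>j. j < n \<Longrightarrow> d (xs j) \<in> borel_measurable Q"
  shows "(\<Sum>i<n. utility d Q n xs i) \<le> 1"
proof -
  interpret prob_space Q by fact
  have int: "integrable Q (share d n xs i)" for i
    using integrable_share[of Q n d xs] finite_measure_axioms assms(2) by blast
  have "(\<Sum>i<n. utility d Q n xs i) = (\<integral>y. (\<Sum>i<n. share d n xs i y) \<partial>Q)"
    by (simp add: utility_eq_integral_share int)
  also have "\<dots> \<le> (\<integral>y. 1 \<partial>Q)"
    by (intro integral_mono Bochner_Integration.integrable_sum int) (simp_all add: sum_share_le_1)
  finally show ?thesis
    by (simp add: prob_space)
qed

lemma ex_utility_le_inverse: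
  assumes "prob_space Q" and "\<And>j. j < n \<Longrightarrow> d (xs j) \<in> borel_measurable Q" and "0 < n"
  shows "\<exists>i<n. utility d Q n xs i \<le> 1 / real n"
proof (rule ccontr)
  assume "\<not> ?thesis"
  then have "(\<Sum>i<n. 1 / real n) < (\<Sum>i<n. utility d Q n xs i)"
    using \<open>0 < n\<close> by (intro sum_strict_mono) auto
  then show False
    using sum_utility_le_1[of Q n d xs] assms \<open>0 < n\<close> by simp
qed

lemma winners_eq_occupants:
  assumes "xstar X d y = {x}" and "\<forall>j<n. xs j \<in> X" and "i < n" and "xs i = x"
  shows "winners d n xs y = {j. j < n \<and> xs j = x}"
proof -
  have x_nearest: "d x y \<le> d x' y" if "x' \<in> X" for x'
    using assms(1) that unfolding xstar_def by blast
  have nearest_unique: "z = x" if "z \<in> X" and "\<forall>x'\<in>X. d z y \<le> d x' y" for z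
    using assms(1) that unfolding xstar_def by blast
  show ?thesis
  proof (intro set_eqI iffI)
    fix j assume "j \<in> winners d n xs y"
    then have "j < n" and "d (xs j) y \<le> d x y"
      using assms(3,4) by (auto simp: winners_def)
    then have "xs j = x"
      using nearest_unique assms(2) x_nearest order_trans by blast
    with \<open>j < n\<close> show "j \<in> {j. j < n \<and> xs j = x}" by simp
  qed (use x_nearest assms(2) in \<open>auto simp: winners_def\<close>)
qed

lemma Pmass_div_kcount_le_utility:
  assumes "prob_space Q" and "\<forall>x\<in>X. d x \<in> borel_measurable Q" and "\<forall>j<n. xs j \<in> X"
    and "{y \<in> space Q. xstar X d y = {x}} \<in> sets Q" and "i < n" and "xs i = x"
  shows "Pmass X d Q x / real (kcount n xs x) \<le> utility d Q n xs i"
proof -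
  interpret prob_space Q by fact
  define A where "A = {y \<in> space Q. xstar X d y = {x}}"
  define K where "K = {j. j < n \<and> xs j = x}"
  have "A \<in> sets Q" using assms(4) by (simp add: A_def)
  have "Pmass X d Q x / real (kcount n xs x) = (\<integral>y. indicator A y / real (card K) \<partial>Q)"
    using \<open>A \<in> sets Q\<close> by (simp add: Pmass_def kcount_def K_def A_def)
  also have "\<dots> \<le> (\<integral>y. share d n xs i y \<partial>Q)"
  proof (rule integral_mono)
    show "integrable Q (\<lambda>y. indicator A y / real (card K))"
      using \<open>A \<in> sets Q\<close>
      by (intro integrable_divide_zero integrable_real_indicator) (auto simp: less_top[symmetric])
    show "integrable Q (share d n xs i)"
      using integrable_share[of Q n d xs i] finite_measure_axioms assms(2,3) by blast
    fix y
    show "indicator A y / real (card K) \<le> share d n xs i y"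
    proof (cases "y \<in> A")
      case True
      then have "xstar X d y = {x}"
        by (simp add: A_def)
      then have "winners d n xs y = K"
        unfolding K_def using assms(3,5,6) by (rule winners_eq_occupants)
      with assms(5,6) show ?thesis
        using True by (simp add: share_def K_def)
    qed (simp add: share_nonneg)
  qed
  finally show ?thesis
    by (simp add: utility_eq_integral_share)
qed

lemma kcount_pos: "i < n \<Longrightarrow> xs i = x \<Longrightarrow> 0 < kcount n xs x"
  by (auto simp: kcount_def card_gt_0_iff)

lemma kcount_fun_upd:
  assumes "i < n" and "xs i \<noteq> x"
  shows "kcount n (xs(i := x)) x = Suc (kcount n xs x)"
proof -
  have "{j. j < n \<and> (xs(i := x)) j = x} = insert i {j. j < n \<and> xs j = x}"
    using assms by auto
  then show ?thesis
    using assms by (simp add: kcount_def)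
qed

lemma pure_NE_utility_ge:
  assumes "pure_NE X d Q n xs" and "prob_space Q" and "\<forall>x\<in>X. d x \<in> borel_measurable Q"
    and "{y \<in> space Q. xstar X d y = {x}} \<in> sets Q" and "x \<in> X" and "i < n"
  shows "\<exists>m. 0 < m \<and> m \<le> Suc (kcount n xs x) \<and> Pmass X d Q x / real m \<le> utility d Q n xs i"
proof -
  have profile: "\<forall>j<n. xs j \<in> X"
    using assms(1) by (simp add: pure_NE_def is_profile_def)
  show ?thesis
  proof (cases "xs i = x")
    case True
    then show ?thesis
      using Pmass_div_kcount_le_utility[OF assms(2,3) profile assms(4,6) True]
        kcount_pos[of i n xs x] assms(6) True by auto
  next
    case False
    define ys where "ys = xs(i := x)"
    have ys_profile: "\<forall>j<n. ys j \<in> X"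
      using profile assms(5) by (simp add: ys_def)
    have "ys i = x"
      by (simp add: ys_def)
    then have "Pmass X d Q x / real (kcount n ys x) \<le> utility d Q n ys i"
      by (rule Pmass_div_kcount_le_utility[OF assms(2,3) ys_profile assms(4,6)])
    also have "\<dots> \<le> utility d Q n xs i"
      using assms(1,5,6) unfolding ys_def pure_NE_def by blast
    finally show ?thesis
      using kcount_fun_upd[of i n xs x] assms(6) False by (auto simp: ys_def)
  qed
qed

lemma Xstar_subset: "Xstar X d Q \<subseteq> X"
  by (auto simp: Xstar_def xstar_def)

lemma p0_le_Pmass: "finite (Xstar X d Q) \<Longrightarrow> x \<in> Xstar X d Q \<Longrightarrow> p0 X d Q \<le> Pmass X d Q x"
  by (simp add: p0_def)

lemma inverse_less_div_of_le_mult: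
  fixes c p m n :: real
  assumes "0 < c" and "c < p" and "0 < m" and "m \<le> c * n"
  shows "1 / n < p / m"
proof -
  have "0 < n"
    using assms by (metis order_less_le_trans zero_less_mult_pos)
  have "m < p * n"
    using assms \<open>0 < n\<close> by (meson mult_strict_right_mono order_le_less_trans)
  then show ?thesis
    using \<open>0 < n\<close> assms(3) by (simp add: field_simps)
qed

theorem lemma5:
  fixes X :: "'x set" and d :: "'x \<Rightarrow> 'y \<Rightarrow> ennreal" and Q :: "'y measure"
    and n :: nat and c :: real and xs :: "nat \<Rightarrow> 'x"
  assumes Q: "prob_space Q"
    and d_meas: "\<forall>x\<in>X. d x \<in> borel_measurable Q"
    and P_meas: "\<forall>x\<in>Xstar X d Q. {y \<in> space Q. xstar X d y = {x}} \<in> sets Q"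
    and unique: "AE y in Q. \<forall>a\<in>xstar X d y. \<forall>b\<in>xstar X d y. a = b"
    and fin: "finite (Xstar X d Q)"
    and c_pos: "c > 0"
    and p0_pos: "p0 X d Q > 0"
    and n_ge: "real n \<ge> 1 / c"
    and c_lt: "1 / c > 2 / p0 X d Q"
    and NE: "pure_NE X d Q n xs"
  shows "\<forall>x\<in>Xstar X d Q. int (kcount n xs x) \<ge> \<lfloor>c * real n\<rfloor>"
proof (intro ballI, rule ccontr)
  fix x assume x: "x \<in> Xstar X d Q" and few: "\<not> \<lfloor>c * real n\<rfloor> \<le> int (kcount n xs x)"
  have "0 < 1 / c"
    using c_pos by simp
  with n_ge have "0 < n"
    by linarith
  have "\<forall>j<n. d (xs j) \<in> borel_measurable Q"
    using NE d_meas by (auto simp: pure_NE_def is_profile_def)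
  then obtain i where "i < n" and poor: "utility d Q n xs i \<le> 1 / real n"
    using ex_utility_le_inverse[of Q n d xs] Q \<open>0 < n\<close> by blast
  have "x \<in> X"
    using x Xstar_subset[of X d Q] by blast
  then obtain m where "0 < m" and "m \<le> Suc (kcount n xs x)"
    and rich: "Pmass X d Q x / real m \<le> utility d Q n xs i"
    using pure_NE_utility_ge[OF NE Q d_meas P_meas[rule_format, OF x] _ \<open>i < n\<close>] by blast
  have "2 * c < p0 X d Q"
    using c_lt c_pos p0_pos by (simp add: field_simps)
  then have "c < Pmass X d Q x"
    using c_pos p0_le_Pmass[OF fin x] by linarith
  moreover have "real m \<le> c * real n"
    using few \<open>m \<le> Suc (kcount n xs x)\<close> of_int_floor_le[of "c * real n"] by linarith
  ultimately have "1 / real n < Pmass X d Q x / real m"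
    using c_pos \<open>0 < m\<close> by (intro inverse_less_div_of_le_mult) auto
  with poor rich show False
    by linarith
qed

end
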